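(* Let $R$ be a ring. The following are equivalent: (i) $R$ is nil-clean; (ii) the upper triangular matrix ring ${\rm T}_n(R)$ is weakly nil-clean for all $n\in\mathbb{N}$; (iii) ${\rm T}_n(R)$ is weakly nil-clean for some $n\ge 3$; (iv) ${\rm T}_n(R)$ is GWNC for some $n\ge 3$.
   Context: All rings are associative with identity. For a ring $S$, $U(S)$, ${\rm Nil}(S)$, ${\rm Id}(S)$ denote units, nilpotents, idempotents. $S$ is GWNC if every $a\in S\setminus U(S)$ can be written as $a=q+e$ or $a=q-e$ with $q\in{\rm Nil}(S)$, $e\in{\rm Id}(S)$. $S$ is weakly nil-clean if for every $a\in S$ there is $e\in{\rm Id}(S)$ with $a-e$ or $a+e$ nilpotent; $S$ is nil-clean if every element is a sum of an idempotent and a nilpotent. ${\rm T}_n(R)$ is the ring of $n\times n$ upper triangular matrices over $R$. *)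

theory Defs
  imports "HOL-Algebra.Ring" "Jordan_Normal_Form.Matrix"
begin

definition nilpotent_el :: "('a, 'b) ring_scheme \<Rightarrow> 'a \<Rightarrow> bool" where
  "nilpotent_el R x \<longleftrightarrow> (\<exists>k::nat. x [^]\<^bsub>R\<^esub> k = \<zero>\<^bsub>R\<^esub>)"

definition idempotent_el :: "('a, 'b) ring_scheme \<Rightarrow> 'a \<Rightarrow> bool" where
  "idempotent_el R e \<longleftrightarrow> e \<otimes>\<^bsub>R\<^esub> e = e"

definition nil_clean :: "('a, 'b) ring_scheme \<Rightarrow> bool" where
  "nil_clean R \<longleftrightarrow> (\<forall>a \<in> carrier R. \<exists>e \<in> carrier R. \<exists>q \<in> carrier R.
      idempotent_el R e \<and> nilpotent_el R q \<and> a = e \<oplus>\<^bsub>R\<^esub> q)"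

definition weakly_nil_clean :: "('a, 'b) ring_scheme \<Rightarrow> bool" where
  "weakly_nil_clean R \<longleftrightarrow> (\<forall>a \<in> carrier R. \<exists>e \<in> carrier R.
      idempotent_el R e \<and> (nilpotent_el R (a \<ominus>\<^bsub>R\<^esub> e) \<or> nilpotent_el R (a \<oplus>\<^bsub>R\<^esub> e)))"

definition GWNC :: "('a, 'b) ring_scheme \<Rightarrow> bool" where
  "GWNC R \<longleftrightarrow> (\<forall>a \<in> carrier R - Units R. \<exists>q \<in> carrier R. \<exists>e \<in> carrier R.
      nilpotent_el R q \<and> idempotent_el R e \<and>
      (a = q \<oplus>\<^bsub>R\<^esub> e \<or> a = q \<ominus>\<^bsub>R\<^esub> e))"

definition class_ring :: "'a::ring_1 ring" where
  "class_ring = \<lparr>carrier = UNIV, mult = (*), one = 1, zero = 0, add = (+)\<rparr>"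

definition upper_tri_ring :: "nat \<Rightarrow> ('a::ring_1) mat ring" where
  "upper_tri_ring n = \<lparr>carrier = {A \<in> carrier_mat n n. upper_triangular A},
      mult = (*), one = 1\<^sub>m n, zero = 0\<^sub>m n n, add = (+)\<rparr>"

end

theory Submission
  imports Defs "HOL-Algebra.RingHom"
begin

text \<open>
  If \<open>R\<close> is nil-clean then so is \<open>T\<^sub>n(R)\<close>: write each diagonal entry of \<open>A\<close> as
  \<open>e\<^sub>i + q\<^sub>i\<close> and take \<open>E = diag(e\<^sub>i)\<close>. Then \<open>A - E\<close> is upper triangular with nilpotent
  diagonal, so some power of it is strictly upper triangular and hence nilpotent.
  In any ring, nil-clean implies weakly nil-clean implies GWNC.
  Conversely, the diagonal entries are ring homomorphisms \<open>T\<^sub>n(R) \<rightarrow> R\<close>. For \<open>n \<ge> 3\<close> the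
  matrix \<open>diag(x, -x, 0, \<dots>)\<close> is not a unit, and applying the first (resp. second) diagonal
  entry to a decomposition \<open>q + e\<close> (resp. \<open>q - e\<close>) of it gives a nil-clean decomposition
  of \<open>x\<close> in \<open>R\<close>.
\<close>

lemma (in ring) nil_clean_imp_weakly_nil_clean:
  assumes "nil_clean R"
  shows "weakly_nil_clean R"
  unfolding weakly_nil_clean_def
proof
  fix a assume "a \<in> carrier R"
  then obtain e q where e: "e \<in> carrier R" "idempotent_el R e" and q: "q \<in> carrier R" "nilpotent_el R q"
    and a: "a = e \<oplus> q"
    using assms unfolding nil_clean_def by blast
  have "a \<ominus> e = q"
    unfolding a using e q by (simp add: a_minus_def a_comm r_neg1)
  then show "\<exists>e\<in>carrier R. idempotent_el R e \<and> (nilpotent_el R (a \<ominus> e) \<or> nilpotent_el R (a \<oplus> e))"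
    using e q by auto
qed

lemma (in ring) weakly_nil_clean_imp_GWNC:
  assumes "weakly_nil_clean R"
  shows "GWNC R"
  unfolding GWNC_def
proof
  fix a assume "a \<in> carrier R - Units R"
  then have a: "a \<in> carrier R" by simp
  then obtain e where e: "e \<in> carrier R" "idempotent_el R e"
    and "nilpotent_el R (a \<ominus> e) \<or> nilpotent_el R (a \<oplus> e)"
    using assms unfolding weakly_nil_clean_def by blast
  moreover have "a = (a \<ominus> e) \<oplus> e" "a = (a \<oplus> e) \<ominus> e"
    using a e by (simp_all add: a_minus_def a_assoc l_neg r_neg)
  ultimately show "\<exists>q\<in>carrier R. \<exists>e\<in>carrier R. nilpotent_el R q \<and> idempotent_el R e \<and>
      (a = q \<oplus> e \<or> a = q \<ominus> e)"
    using a by blast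
qed

lemma (in ring) nilpotent_el_a_inv:
  assumes "q \<in> carrier R" "nilpotent_el R q"
  shows "nilpotent_el R (\<ominus> q)"
proof -
  obtain k :: nat where "q [^] k = \<zero>"
    using assms(2) unfolding nilpotent_el_def by blast
  have "(\<ominus> q) [^] k = (\<ominus> \<one> \<otimes> q) [^] k"
    using assms(1) by (simp add: l_minus)
  also have "\<dots> = (\<ominus> \<one>) [^] k \<otimes> q [^] k"
    using assms(1) by (intro pow_mult_distrib) (simp_all add: l_minus r_minus)
  also have "\<dots> = \<zero>"
    using \<open>q [^] k = \<zero>\<close> by simp
  finally show ?thesis
    unfolding nilpotent_el_def by blast
qed

lemma (in ring_hom_ring) hom_idempotent_el:
  "e \<in> carrier R \<Longrightarrow> idempotent_el R e \<Longrightarrow> idempotent_el S (h e)"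
  unfolding idempotent_el_def by (metis hom_mult)

lemma (in ring_hom_ring) hom_nilpotent_el:
  "x \<in> carrier R \<Longrightarrow> nilpotent_el R x \<Longrightarrow> nilpotent_el S (h x)"
  unfolding nilpotent_el_def by (metis hom_nat_pow hom_zero)

lemma (in ring_hom_ring) not_Units_if_hom_zero:
  assumes "\<zero>\<^bsub>S\<^esub> \<noteq> \<one>\<^bsub>S\<^esub>" "a \<in> carrier R" "h a = \<zero>\<^bsub>S\<^esub>"
  shows "a \<notin> Units R"
proof
  assume "a \<in> Units R"
  then obtain b where "b \<in> carrier R" "b \<otimes> a = \<one>"
    unfolding Units_def by blast
  then have "h b \<otimes>\<^bsub>S\<^esub> \<zero>\<^bsub>S\<^esub> = \<one>\<^bsub>S\<^esub>"
    using assms by (metis hom_mult hom_one)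
  then show False
    using assms \<open>b \<in> carrier R\<close> by simp
qed

lemma (in ring) nil_clean_if_GWNC_lifts:
  assumes "ring S" "GWNC S" "h \<in> ring_hom S R" "g \<in> ring_hom S R"
    and lift: "\<And>x. x \<in> carrier R \<Longrightarrow> \<exists>A \<in> carrier S - Units S. h A = x \<and> g A = \<ominus> x"
  shows "nil_clean R"
  unfolding nil_clean_def
proof
  interpret h: ring_hom_ring S R h by (intro ring_hom_ringI2 assms ring_axioms)
  interpret g: ring_hom_ring S R g by (intro ring_hom_ringI2 assms ring_axioms)
  fix x assume x: "x \<in> carrier R"
  then obtain A where "A \<in> carrier S - Units S" "h A = x" "g A = \<ominus> x"
    using lift by blast
  then obtain q e where q: "q \<in> carrier S" "nilpotent_el S q" and e: "e \<in> carrier S" "idempotent_el S e"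
    and decomp: "A = q \<oplus>\<^bsub>S\<^esub> e \<or> A = q \<ominus>\<^bsub>S\<^esub> e"
    using \<open>GWNC S\<close> unfolding GWNC_def by blast
  from decomp consider "x = h e \<oplus> h q" | "x = g e \<oplus> \<ominus> g q"
  proof
    assume "A = q \<oplus>\<^bsub>S\<^esub> e"
    then show ?thesis
      using that \<open>h A = x\<close> q e by (simp add: a_comm)
  next
    assume "A = q \<ominus>\<^bsub>S\<^esub> e"
    then have "x = \<ominus> (g q \<oplus> \<ominus> g e)"
      using \<open>g A = \<ominus> x\<close> q e x by (simp add: a_minus_def)
    then show ?thesis
      using that q e by (simp add: minus_add a_comm)
  qed
  then show "\<exists>e\<in>carrier R. \<exists>q\<in>carrier R. idempotent_el R e \<and> nilpotent_el R q \<and> x = e \<oplus> q"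
  proof cases
    case 1
    with q e show ?thesis
      by (intro bexI[of _ "h e"] bexI[of _ "h q"]) (auto intro: h.hom_idempotent_el h.hom_nilpotent_el)
  next
    case 2
    with q e show ?thesis
      by (intro bexI[of _ "g e"] bexI[of _ "\<ominus> g q"])
        (auto intro: g.hom_idempotent_el g.hom_nilpotent_el nilpotent_el_a_inv)
  qed
qed

lemma class_ring_simps [simp]:
  "carrier (class_ring :: 'a::ring_1 ring) = UNIV"
  "mult (class_ring :: 'a ring) = (*)"
  "one (class_ring :: 'a ring) = 1"
  "zero (class_ring :: 'a ring) = 0"
  "add (class_ring :: 'a ring) = (+)"
  by (simp_all add: class_ring_def)

lemma ring_class_ring: "ring (class_ring :: 'a::ring_1 ring)"
  by (unfold_locales) (auto simp: Units_def algebra_simps intro: exI[of _ "- _"])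

lemma class_ring_nat_pow [simp]: "x [^]\<^bsub>class_ring\<^esub> (k::nat) = (x::'a::ring_1) ^ k"
  by (induct k) (simp_all add: power_Suc2 del: power_Suc)

lemma class_ring_a_inv [simp]: "\<ominus>\<^bsub>class_ring\<^esub> x = - (x::'a::ring_1)"
  using abelian_group.minus_equality[OF ring.is_abelian_group[OF ring_class_ring], of "- x" x] by simp

lemma power_eq_zero_mono: "x ^ k = 0 \<Longrightarrow> k \<le> m \<Longrightarrow> (x::'a::semiring_1) ^ m = 0"
  by (metis le_add_diff_inverse mult_zero_left power_add)

lemma upper_triangular_add:
  "A \<in> carrier_mat n n \<Longrightarrow> B \<in> carrier_mat n n \<Longrightarrow> upper_triangular A \<Longrightarrow> upper_triangular B
   \<Longrightarrow> upper_triangular (A + B :: 'a::monoid_add mat)"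
  unfolding upper_triangular_def by auto

lemma upper_triangular_uminus:
  "A \<in> carrier_mat n n \<Longrightarrow> upper_triangular A \<Longrightarrow> upper_triangular (- A :: 'a::group_add mat)"
  unfolding upper_triangular_def by auto

lemma upper_triangular_mult:
  assumes "A \<in> carrier_mat n n" "B \<in> carrier_mat n n" "upper_triangular A" "upper_triangular B"
  shows "upper_triangular (A * B :: 'a::semiring_0 mat)"
proof (rule upper_triangularI)
  fix i j assume "j < i" "i < dim_row (A * B)"
  then have "A $$ (i, l) * B $$ (l, j) = 0" if "l < n" for l
    using assms that by (cases "l < i") (auto simp: upper_triangularD)
  then show "(A * B) $$ (i, j) = 0"
    using assms \<open>j < i\<close> \<open>i < dim_row (A * B)\<close> by (auto simp: scalar_prod_def intro!: sum.neutral)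
qed

lemma upper_triangular_mult_diag:
  assumes "A \<in> carrier_mat n n" "B \<in> carrier_mat n n" "upper_triangular A" "upper_triangular B"
    and "i < n"
  shows "(A * B) $$ (i, i) = A $$ (i, i) * (B :: 'a::semiring_0 mat) $$ (i, i)"
proof -
  have "A $$ (i, l) * B $$ (l, i) = 0" if "l < n" "l \<noteq> i" for l
    using assms that by (cases "l < i") (auto simp: upper_triangularD)
  then have "(\<Sum>l = 0..<n. A $$ (i, l) * B $$ (l, i)) = (\<Sum>l\<in>{i}. A $$ (i, l) * B $$ (l, i))"
    using \<open>i < n\<close> by (intro sum.mono_neutral_right) auto
  then show ?thesis
    using assms by (simp add: scalar_prod_def)
qed

lemma strictly_upper_triangular_pow_entry:
  assumes M: "M \<in> carrier_mat n n"
    and strict: "\<And>i j. i < n \<Longrightarrow> j \<le> i \<Longrightarrow> M $$ (i, j) = 0"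
    and "i < n" "j < n" "j < i + p"
  shows "(M ^\<^sub>m p) $$ (i, j) = (0::'a::semiring_1)"
  using assms(3-)
proof (induction p arbitrary: j)
  case (Suc p)
  have "(M ^\<^sub>m p) $$ (i, l) * M $$ (l, j) = 0" if "l < n" for l
    using Suc strict that by (cases "l < i + p") auto
  then show ?case
    using M Suc.prems by (auto simp: scalar_prod_def intro!: sum.neutral)
qed (use M in auto)

lemma strictly_upper_triangular_nilpotent:
  assumes "M \<in> carrier_mat n n" "\<And>i j. i < n \<Longrightarrow> j \<le> i \<Longrightarrow> M $$ (i, j) = 0"
  shows "M ^\<^sub>m n = (0\<^sub>m n n :: 'a::semiring_1 mat)"
  using assms strictly_upper_triangular_pow_entry[OF assms] by (intro eq_matI) auto

lemma upper_tri_ring_simps [simp]: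
  "carrier (upper_tri_ring n) = {A \<in> carrier_mat n n. upper_triangular A}"
  "mult (upper_tri_ring n) = (*)"
  "one (upper_tri_ring n) = 1\<^sub>m n"
  "zero (upper_tri_ring n) = 0\<^sub>m n n"
  "add (upper_tri_ring n) = (+)"
  by (simp_all add: upper_tri_ring_def)

lemma ring_upper_tri_ring: "ring (upper_tri_ring n :: 'a::ring_1 mat ring)"
  by unfold_locales
    (auto simp: Units_def upper_triangular_add upper_triangular_mult add_mult_distrib_mat
      mult_add_distrib_mat intro!: exI[of _ "- _"] upper_triangular_uminus)

lemma upper_tri_ring_nat_pow:
  "A \<in> carrier_mat n n \<Longrightarrow> A [^]\<^bsub>upper_tri_ring n\<^esub> (k::nat) = (A :: 'a::ring_1 mat) ^\<^sub>m k"
  by (induct k) simp_all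

lemma upper_tri_ring_a_minus [simp]:
  fixes A B :: "'a::ring_1 mat"
  assumes "A \<in> carrier (upper_tri_ring n)" "B \<in> carrier (upper_tri_ring n)"
  shows "A \<ominus>\<^bsub>upper_tri_ring n\<^esub> B = A - B"
proof -
  interpret T: ring "upper_tri_ring n :: 'a mat ring" by (rule ring_upper_tri_ring)
  have "\<ominus>\<^bsub>upper_tri_ring n\<^esub> B = - B"
    using assms by (intro T.minus_equality) (auto intro: upper_triangular_uminus)
  then show ?thesis
    using assms by (simp add: a_minus_def add_uminus_minus_mat[of _ n n])
qed

lemma diag_entry_ring_hom:
  assumes "i < n"
  shows "(\<lambda>A. A $$ (i, i)) \<in> ring_hom (upper_tri_ring n) (class_ring :: 'a::ring_1 ring)"
  using assms by (auto intro!: ring_hom_memI upper_triangular_mult_diag)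

lemma upper_tri_ring_nilpotent_if_diag_nilpotent:
  fixes N :: "'a::ring_1 mat"
  assumes N: "N \<in> carrier (upper_tri_ring n)"
    and diag: "\<And>i. i < n \<Longrightarrow> \<exists>k. N $$ (i, i) ^ k = 0"
  shows "nilpotent_el (upper_tri_ring n) N"
proof -
  interpret T: ring "upper_tri_ring n :: 'a mat ring" by (rule ring_upper_tri_ring)
  obtain k where k: "\<And>i. i < n \<Longrightarrow> N $$ (i, i) ^ k i = 0"
    using diag by metis
  define K where "K = (\<Sum>i<n. k i)"
  define M where "M = N [^]\<^bsub>upper_tri_ring n\<^esub> K"
  have M: "M \<in> carrier (upper_tri_ring n)"
    unfolding M_def using N by (rule T.nat_pow_closed)
  have "M $$ (i, i) = 0" if "i < n" for i
  proof -
    interpret \<pi>: ring_hom_ring "upper_tri_ring n" "class_ring :: 'a ring" "\<lambda>A. A $$ (i, i)"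
      by (intro ring_hom_ringI2 ring_upper_tri_ring ring_class_ring diag_entry_ring_hom that)
    have "k i \<le> K"
      unfolding K_def using that by (intro member_le_sum) auto
    then have "N $$ (i, i) ^ K = 0"
      by (rule power_eq_zero_mono[OF k[OF that]])
    then show ?thesis
      unfolding M_def using N by (simp add: \<pi>.hom_nat_pow)
  qed
  then have "M $$ (i, j) = 0" if "i < n" "j \<le> i" for i j
    using M that by (cases "j = i") (auto simp: upper_triangularD)
  then have "M ^\<^sub>m n = 0\<^sub>m n n"
    using M by (intro strictly_upper_triangular_nilpotent) auto
  have "N [^]\<^bsub>upper_tri_ring n\<^esub> (K * n) = M [^]\<^bsub>upper_tri_ring n\<^esub> n"
    unfolding M_def using N by (simp add: T.nat_pow_pow)
  also have "\<dots> = \<zero>\<^bsub>upper_tri_ring n\<^esub>"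
    using M \<open>M ^\<^sub>m n = 0\<^sub>m n n\<close> by (simp add: upper_tri_ring_nat_pow)
  finally show ?thesis
    unfolding nilpotent_el_def by blast
qed

lemma nil_clean_upper_tri_ring:
  assumes "nil_clean (class_ring :: 'a::ring_1 ring)"
  shows "nil_clean (upper_tri_ring n :: 'a mat ring)"
  unfolding nil_clean_def
proof
  fix A :: "'a mat" assume A: "A \<in> carrier (upper_tri_ring n)"
  interpret T: ring "upper_tri_ring n :: 'a mat ring" by (rule ring_upper_tri_ring)
  have "\<forall>i. \<exists>e q. e * e = e \<and> (\<exists>k. q ^ k = 0) \<and> A $$ (i, i) = e + q"
    using assms unfolding nil_clean_def idempotent_el_def nilpotent_el_def by simp
  then obtain e q where e: "\<And>i. e i * e i = e i" and q: "\<And>i. \<exists>k. q i ^ k = 0"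
    and diag: "\<And>i. A $$ (i, i) = e i + q i"
    by metis
  define E where "E = mat_diag n e"
  have E: "E \<in> carrier (upper_tri_ring n)"
    unfolding E_def by (auto simp: mat_diag_def)
  have AE: "A - E \<in> carrier (upper_tri_ring n)"
    using T.minus_closed[OF A E] A E by simp
  have "idempotent_el (upper_tri_ring n) E"
    unfolding idempotent_el_def E_def using e by simp
  moreover have "nilpotent_el (upper_tri_ring n) (A - E)"
    using AE
  proof (rule upper_tri_ring_nilpotent_if_diag_nilpotent)
    show "\<exists>k. (A - E) $$ (i, i) ^ k = 0" if "i < n" for i
      using A that q[of i] diag[of i] by (simp add: E_def mat_diag_def)
  qed
  moreover have "A = E + (A - E)"
    using A E by (intro eq_matI) auto
  ultimately show "\<exists>E\<in>carrier (upper_tri_ring n). \<exists>Q\<in>carrier (upper_tri_ring n).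
      idempotent_el (upper_tri_ring n) E \<and> nilpotent_el (upper_tri_ring n) Q \<and>
      A = E \<oplus>\<^bsub>upper_tri_ring n\<^esub> Q"
    using E AE by auto
qed

lemma nil_clean_if_GWNC_upper_tri_ring:
  assumes "3 \<le> n" "GWNC (upper_tri_ring n :: 'a::ring_1 mat ring)"
  shows "nil_clean (class_ring :: 'a ring)"
proof -
  have n: "0 < n" "1 < n" "2 < n"
    using assms(1) by auto
  interpret \<pi>\<^sub>2: ring_hom_ring "upper_tri_ring n" "class_ring :: 'a ring" "\<lambda>A. A $$ (2, 2)"
    by (intro ring_hom_ringI2 ring_upper_tri_ring ring_class_ring diag_entry_ring_hom n)
  show ?thesis
  proof (rule ring.nil_clean_if_GWNC_lifts[OF ring_class_ring ring_upper_tri_ring assms(2)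
        diag_entry_ring_hom[OF n(1)] diag_entry_ring_hom[OF n(2)]])
    fix x :: 'a
    define A where "A = mat_diag n (\<lambda>i. if i = 0 then x else if i = 1 then - x else 0)"
    have A: "A \<in> carrier (upper_tri_ring n)"
      unfolding A_def by (auto simp: mat_diag_def)
    moreover have "A \<notin> Units (upper_tri_ring n)"
      using A n by (intro \<pi>\<^sub>2.not_Units_if_hom_zero) (auto simp: A_def mat_diag_def)
    moreover have "A $$ (0, 0) = x" "A $$ (1, 1) = - x"
      using n by (simp_all add: A_def mat_diag_def)
    ultimately show "\<exists>A\<in>carrier (upper_tri_ring n) - Units (upper_tri_ring n).
        A $$ (0, 0) = x \<and> A $$ (1, 1) = \<ominus>\<^bsub>class_ring\<^esub> x"
      by auto
  qed
qed

theorem proposition2p26: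
  shows "(nil_clean (class_ring :: 'a::ring_1 ring)
            \<longleftrightarrow> (\<forall>n\<ge>1. weakly_nil_clean (upper_tri_ring n :: 'a mat ring)))
       \<and> (nil_clean (class_ring :: 'a ring)
            \<longleftrightarrow> (\<exists>n\<ge>3. weakly_nil_clean (upper_tri_ring n :: 'a mat ring)))
       \<and> (nil_clean (class_ring :: 'a ring)
            \<longleftrightarrow> (\<exists>n\<ge>3. GWNC (upper_tri_ring n :: 'a mat ring)))"
proof -
  have weakly_nil_clean: "weakly_nil_clean (upper_tri_ring n :: 'a mat ring)"
    if "nil_clean (class_ring :: 'a ring)" for n
    using ring.nil_clean_imp_weakly_nil_clean[OF ring_upper_tri_ring nil_clean_upper_tri_ring[OF that]] .
  have GWNC: "GWNC (upper_tri_ring n :: 'a mat ring)"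
    if "weakly_nil_clean (upper_tri_ring n :: 'a mat ring)" for n
    using ring.weakly_nil_clean_imp_GWNC[OF ring_upper_tri_ring that] .
  have "(3::nat) \<ge> 1" "(3::nat) \<ge> 3"
    by simp_all
  then show ?thesis
    using weakly_nil_clean GWNC nil_clean_if_GWNC_upper_tri_ring by blast
qed

end
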